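(* Let $\Theta$ be a finite simple oriented graph with simple cycles $C_1,\ldots,C_k$ ($k\geq1$) that does not contain two different cycles connected by an oriented path, and let $\Theta'$ be its maximal cycle-reachable subgraph. For every vertex $x\in V(\Theta')\setminus(V(C_1)\cup\cdots\cup V(C_k))$, either all oriented paths between $x$ and any cycle lead from $x$ into cycles, or all lead from cycles into $x$. Let $k_x$ be the number of oriented paths of non-negative length in $\Theta$ ending at $x$ in the first case, and the number of oriented paths of non-negative length in $\Theta$ beginning at $x$ in the second case. Then, for any deg-lex order on the free monoid on $V(\Theta)$, in every reduced word of $\mathrm{HK}_\Theta$ the letter $x$ occurs at most $k_x$ times.
   Context: $\mathrm{HK}_\Theta$ is the Hecke--Kiselman monoid of $\Theta$: generated by the vertices $x$, with $x^2=x$; $xy=yx$ if $x,y$ are not joined by an edge; $xyx=yxy=xy$ if $x\to y$. The maximal cycle-reachable subgraph $\Theta'$ is the full subgraph of $\Theta$ on all vertices lying on a cycle together with all vertices connected to at least one cycle by an oriented path (in either direction). A path of length $0$ at $x$ counts as exactly one path starting and ending at $x$. For a word $w$ and vertex $t$: $w\nrightarrow t$ means $t$ does not occur in $w$ and no letter $x$ of $w$ has $x\to t$; $t\nrightarrow w$ means $t$ does not occur in $w$ and no letter $y$ of $w$ has $t\to y$; $t\nleftrightarrow w$ means both. Given a deg-lex order on words (induced by a total order on vertices), a word is reduced if it has no factor of the form $twt$ with $w\nrightarrow t$, no factor $twt$ with $t\nrightarrow w$, and no factor $t_1wt_2$ with $t_1>t_2$ and $t_2\nleftrightarrow t_1w$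 (here $t,t_1,t_2$ are vertices, $w$ a word). *)

theory Defs
  imports Main
begin

definition simple_oriented_graph :: "'a set \<Rightarrow> ('a \<Rightarrow> 'a \<Rightarrow> bool) \<Rightarrow> bool" where
  "simple_oriented_graph V E \<longleftrightarrow> finite V \<and>
     (\<forall>x y. E x y \<longrightarrow> x \<in> V \<and> y \<in> V) \<and>
     (\<forall>x. \<not> E x x) \<and> (\<forall>x y. E x y \<longrightarrow> \<not> E y x)"

text \<open>Oriented path (vertices pairwise distinct), of length length p - 1 >= 0.\<close>
definition is_path :: "'a set \<Rightarrow> ('a \<Rightarrow> 'a \<Rightarrow> bool) \<Rightarrow> 'a list \<Rightarrow> bool" where
  "is_path V E p \<longleftrightarrow> p \<noteq> [] \<and> set p \<subseteq> V \<and> distinct p \<and>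
     (\<forall>i. Suc i < length p \<longrightarrow> E (p ! i) (p ! Suc i))"

definition is_cycle :: "'a set \<Rightarrow> ('a \<Rightarrow> 'a \<Rightarrow> bool) \<Rightarrow> 'a list \<Rightarrow> bool" where
  "is_cycle V E c \<longleftrightarrow> length c \<ge> 2 \<and> distinct c \<and> set c \<subseteq> V \<and>
     (\<forall>i < length c. E (c ! i) (c ! ((Suc i) mod length c)))"

text \<open>A cycle as a subgraph is determined by its set of arrows (independent of rotation).\<close>
definition cycle_edges :: "'a list \<Rightarrow> ('a \<times> 'a) set" where
  "cycle_edges c = {(c ! i, c ! ((Suc i) mod length c)) | i. i < length c}"

definition cycle_vertices :: "'a set \<Rightarrow> ('a \<Rightarrow> 'a \<Rightarrow> bool) \<Rightarrow> 'a set" where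
  "cycle_vertices V E = \<Union>{set c | c. is_cycle V E c}"

definition no_connected_cycles :: "'a set \<Rightarrow> ('a \<Rightarrow> 'a \<Rightarrow> bool) \<Rightarrow> bool" where
  "no_connected_cycles V E \<longleftrightarrow>
     (\<forall>c d. is_cycle V E c \<and> is_cycle V E d \<and> cycle_edges c \<noteq> cycle_edges d \<longrightarrow>
        \<not> (\<exists>p. is_path V E p \<and> hd p \<in> set c \<and> last p \<in> set d))"

definition cycle_reachable_vertices :: "'a set \<Rightarrow> ('a \<Rightarrow> 'a \<Rightarrow> bool) \<Rightarrow> 'a set" where
  "cycle_reachable_vertices V E = cycle_vertices V E \<union>
     {x. \<exists>p. is_path V E p \<and>
          ((hd p = x \<and> last p \<in> cycle_vertices V E) \<or> (hd p \<in> cycle_vertices V E \<and> last p = x))}"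

definition leads_into_cycles :: "'a set \<Rightarrow> ('a \<Rightarrow> 'a \<Rightarrow> bool) \<Rightarrow> 'a \<Rightarrow> bool" where
  "leads_into_cycles V E x \<longleftrightarrow>
     (\<forall>p. is_path V E p \<and> ((hd p = x \<and> last p \<in> cycle_vertices V E) \<or>
                            (hd p \<in> cycle_vertices V E \<and> last p = x))
        \<longrightarrow> hd p = x \<and> last p \<in> cycle_vertices V E)"

definition leads_from_cycles :: "'a set \<Rightarrow> ('a \<Rightarrow> 'a \<Rightarrow> bool) \<Rightarrow> 'a \<Rightarrow> bool" where
  "leads_from_cycles V E x \<longleftrightarrow>
     (\<forall>p. is_path V E p \<and> ((hd p = x \<and> last p \<in> cycle_vertices V E) \<or>
                            (hd p \<in> cycle_vertices V E \<and> last p = x))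
        \<longrightarrow> hd p \<in> cycle_vertices V E \<and> last p = x)"

definition not_to :: "('a \<Rightarrow> 'a \<Rightarrow> bool) \<Rightarrow> 'a list \<Rightarrow> 'a \<Rightarrow> bool" where
  "not_to E w t \<longleftrightarrow> t \<notin> set w \<and> (\<forall>y \<in> set w. \<not> E y t)"

definition not_from :: "('a \<Rightarrow> 'a \<Rightarrow> bool) \<Rightarrow> 'a \<Rightarrow> 'a list \<Rightarrow> bool" where
  "not_from E t w \<longleftrightarrow> t \<notin> set w \<and> (\<forall>y \<in> set w. \<not> E t y)"

definition not_conn :: "('a \<Rightarrow> 'a \<Rightarrow> bool) \<Rightarrow> 'a \<Rightarrow> 'a list \<Rightarrow> bool" where
  "not_conn E t w \<longleftrightarrow> not_to E w t \<and> not_from E t w"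

text \<open>Reduced words with respect to the deg-lex order induced by the strict total
  order ord on the vertices ((a,b) \<in> ord means a < b).\<close>
definition reduced :: "('a \<Rightarrow> 'a \<Rightarrow> bool) \<Rightarrow> 'a rel \<Rightarrow> 'a list \<Rightarrow> bool" where
  "reduced E ord u \<longleftrightarrow>
     \<not> (\<exists>a t w b. u = a @ [t] @ w @ [t] @ b \<and> not_to E w t) \<and>
     \<not> (\<exists>a t w b. u = a @ [t] @ w @ [t] @ b \<and> not_from E t w) \<and>
     \<not> (\<exists>a t1 w t2 b. u = a @ [t1] @ w @ [t2] @ b \<and> (t2, t1) \<in> ord \<and>
          not_conn E t2 (t1 # w))"

end

theory Submission
  imports Defs
begin

text \<open>
  If some cycle vertex a reached x and x reached some cycle vertex b, the path from a to b would
  join the cycles through a and b; these must therefore coincide, so x would lie on a closed walk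
  and hence on a cycle.

  For the bound, consider the case that x reaches the cycles; the other one is the same statement
  for the converse graph, whose first reducedness condition is the second one of the original
  graph. No ancestor of x lies on a closed walk, so we may argue by induction over the ancestors.
  Reducedness forbids a factor x w x of u in which w contains no in-neighbour of x, hence the
  number of occurrences of x in u is at most 1 plus the sum of those of its in-neighbours y. The
  paths ending at x are [x] and the extensions of the paths ending at the in-neighbours, so k_x
  satisfies the same inequality in the reverse direction: k_x \<ge> 1 + \<Sum> k_y.
\<close>

abbreviation paths_ending_at :: "'a set \<Rightarrow> ('a \<Rightarrow> 'a \<Rightarrow> bool) \<Rightarrow> 'a \<Rightarrow> 'a list set" where
  "paths_ending_at V E v \<equiv> {p. is_path V E p \<and> last p = v}"

abbreviation paths_starting_at :: "'a set \<Rightarrow> ('a \<Rightarrow> 'a \<Rightarrow> bool) \<Rightarrow> 'a \<Rightarrow> 'a list set" where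
  "paths_starting_at V E v \<equiv> {p. is_path V E p \<and> hd p = v}"

lemma is_path_nth_rtranclp:
  assumes "is_path V E p" "i \<le> j" "j < length p"
  shows "E\<^sup>*\<^sup>* (p ! i) (p ! j)"
  using assms(2,3)
proof (induction j)
  case (Suc j)
  show ?case
  proof (cases "i = Suc j")
    case False
    then have "E\<^sup>*\<^sup>* (p ! i) (p ! j)" using Suc by simp
    moreover have "E (p ! j) (p ! Suc j)" using assms(1) Suc.prems unfolding is_path_def by blast
    ultimately show ?thesis by (rule rtranclp.rtrancl_into_rtrancl)
  qed simp
qed simp

lemma is_path_rtranclp_last:
  assumes "is_path V E p" "y \<in> set p"
  shows "E\<^sup>*\<^sup>* y (last p)"
proof -
  obtain i where i: "i < length p" "p ! i = y" using assms(2) by (auto simp: in_set_conv_nth)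
  then have "p \<noteq> []" by auto
  then have "last p = p ! (length p - 1)" by (simp add: last_conv_nth)
  then show ?thesis using is_path_nth_rtranclp[OF assms(1), of i "length p - 1"] i by simp
qed

lemma is_path_snoc:
  assumes "is_path V E p" "E (last p) v" "v \<in> V" "v \<notin> set p"
  shows "is_path V E (p @ [v])"
proof -
  have "E ((p @ [v]) ! i) ((p @ [v]) ! Suc i)" if "Suc i < length (p @ [v])" for i
  proof (cases "Suc i < length p")
    case True
    then show ?thesis using assms(1) unfolding is_path_def by (simp add: nth_append)
  next
    case False
    then have "i = length p - 1" "p \<noteq> []" using that by auto
    then show ?thesis using assms(2) by (simp add: nth_append last_conv_nth)
  qed
  then show ?thesis using assms unfolding is_path_def by auto
qed

lemma is_path_take:
  assumes "is_path V E p" "i < length p"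
  shows "is_path V E (take (Suc i) p)" "hd (take (Suc i) p) = hd p" "last (take (Suc i) p) = p ! i"
proof -
  show "is_path V E (take (Suc i) p)" "hd (take (Suc i) p) = hd p"
    using assms unfolding is_path_def by (auto dest: in_set_takeD)
  have "take (Suc i) p \<noteq> []" using assms(2) by (cases p) auto
  then show "last (take (Suc i) p) = p ! i"
    using assms(2) by (auto simp: last_conv_nth min_def intro: arg_cong[where f = "(!) p"])
qed

lemma rtranclp_imp_ex_path:
  assumes "E\<^sup>*\<^sup>* a b" "a \<in> V" "\<forall>x y. E x y \<longrightarrow> x \<in> V \<and> y \<in> V"
  shows "\<exists>p. is_path V E p \<and> hd p = a \<and> last p = b"
  using assms(1)
proof (induction rule: rtranclp_induct)
  case base
  show ?case using assms(2) by (intro exI[of _ "[a]"]) (simp add: is_path_def)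
next
  case (step y z)
  then obtain p where p: "is_path V E p" "hd p = a" "last p = y" by blast
  show ?case
  proof (cases "z \<in> set p")
    case True
    then obtain i where "i < length p" "p ! i = z" by (auto simp: in_set_conv_nth)
    then show ?thesis using is_path_take[OF p(1)] p(2) by metis
  next
    case False
    then have "is_path V E (p @ [z])" using is_path_snoc[OF p(1)] step assms(3) p(3) by auto
    moreover have "p \<noteq> []" using p(1) unfolding is_path_def by simp
    ultimately show ?thesis using p(2) by (intro exI[of _ "p @ [z]"]) simp
  qed
qed

lemma ex_path_iff_rtranclp:
  assumes "\<forall>x y. E x y \<longrightarrow> x \<in> V \<and> y \<in> V"
  shows "(\<exists>p. is_path V E p \<and> hd p = a \<and> last p = b) \<longleftrightarrow> a \<in> V \<and> E\<^sup>*\<^sup>* a b"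
proof
  assume "\<exists>p. is_path V E p \<and> hd p = a \<and> last p = b"
  then obtain p where p: "is_path V E p" "hd p = a" "last p = b" by blast
  then have "a \<in> set p" "set p \<subseteq> V" unfolding is_path_def by auto
  then show "a \<in> V \<and> E\<^sup>*\<^sup>* a b" using is_path_rtranclp_last[OF p(1)] p(3) by blast
next
  assume "a \<in> V \<and> E\<^sup>*\<^sup>* a b"
  then show "\<exists>p. is_path V E p \<and> hd p = a \<and> last p = b"
    using rtranclp_imp_ex_path[OF _ _ assms] by simp
qed

lemma is_path_conversep_imp_rev:
  assumes "is_path V E\<inverse>\<inverse> p"
  shows "is_path V E (rev p)"
proof -
  have "E (rev p ! i) (rev p ! Suc i)" if "Suc i < length p" for i
  proof -
    define j where "j = length p - Suc (Suc i)"
    have "Suc j < length p" "length p - Suc i = Suc j" "length p - Suc (Suc i) = j"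
      using that unfolding j_def by auto
    then show ?thesis using assms that unfolding is_path_def by (simp add: rev_nth)
  qed
  then show ?thesis using assms unfolding is_path_def by auto
qed

lemma is_path_conversep: "is_path V E\<inverse>\<inverse> p \<longleftrightarrow> is_path V E (rev p)"
  using is_path_conversep_imp_rev[of V E p] is_path_conversep_imp_rev[of V "E\<inverse>\<inverse>" "rev p"]
  by auto

lemma card_paths_ending_at_conversep:
  "card (paths_ending_at V E\<inverse>\<inverse> v) = card (paths_starting_at V E v)"
proof -
  have "paths_ending_at V E\<inverse>\<inverse> v = rev ` paths_starting_at V E v"
  proof (intro set_eqI iffI)
    fix p assume "p \<in> paths_ending_at V E\<inverse>\<inverse> v"
    moreover from this have "p \<noteq> []" unfolding is_path_def by simp
    ultimately show "p \<in> rev ` paths_starting_at V E v"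
      by (intro image_eqI[of _ _ "rev p"]) (auto simp: is_path_conversep hd_rev)
  next
    fix p assume "p \<in> rev ` paths_starting_at V E v"
    then obtain q where q: "p = rev q" "is_path V E q" "hd q = v" by auto
    moreover have "q \<noteq> []" using q(2) unfolding is_path_def by simp
    ultimately show "p \<in> paths_ending_at V E\<inverse>\<inverse> v" by (simp add: is_path_conversep last_rev)
  qed
  then show ?thesis by (simp add: card_image)
qed

lemma finite_paths:
  assumes "finite V"
  shows "finite {p. is_path V E p}"
proof -
  have "{p. is_path V E p} \<subseteq> {xs. set xs \<subseteq> V \<and> length xs \<le> card V}"
    using assms unfolding is_path_def by (auto simp: card_mono distinct_card[symmetric])
  then show ?thesis using finite_lists_length_le[OF assms] finite_subset by blast
qed

lemma is_path_imp_cycle: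
  assumes "is_path V E p" "length p \<ge> 2" "E (last p) (hd p)"
  shows "is_cycle V E p"
proof -
  have "E (p ! i) (p ! (Suc i mod length p))" if "i < length p" for i
  proof (cases "Suc i < length p")
    case True
    then show ?thesis using assms(1) unfolding is_path_def by simp
  next
    case False
    then have "i = length p - 1" "p \<noteq> []" using that by auto
    then show ?thesis using assms(3) by (simp add: last_conv_nth hd_conv_nth)
  qed
  then show ?thesis using assms unfolding is_path_def is_cycle_def by auto
qed

lemma tranclp_self_imp_cycle_vertex:
  assumes graph: "simple_oriented_graph V E" and "E\<^sup>+\<^sup>+ v v"
  shows "v \<in> cycle_vertices V E"
proof -
  have edges: "\<forall>x y. E x y \<longrightarrow> x \<in> V \<and> y \<in> V" and irr: "\<not> E v v"
    using graph unfolding simple_oriented_graph_def by auto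
  obtain y where y: "E v y" "E\<^sup>*\<^sup>* y v" using assms(2) tranclpD by metis
  then obtain p where p: "is_path V E p" "hd p = y" "last p = v"
    using rtranclp_imp_ex_path[OF y(2) _ edges] edges by blast
  have "y \<noteq> v" using y(1) irr by auto
  then have "length p \<ge> 2" using p by (cases p; cases "tl p") (auto simp: is_path_def)
  then have "is_cycle V E p" using is_path_imp_cycle[OF p(1)] p y(1) by simp
  moreover have "v \<in> set p" using p unfolding is_path_def by auto
  ultimately show ?thesis unfolding cycle_vertices_def by blast
qed

lemma cycle_rtranclp:
  assumes "is_cycle V E c" "a \<in> set c" "b \<in> set c"
  shows "E\<^sup>*\<^sup>* a b"
proof -
  let ?n = "length c"
  obtain i j where ij: "i < ?n" "c ! i = a" "j < ?n" "c ! j = b"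
    using assms(2,3) by (auto simp: in_set_conv_nth)
  have "E\<^sup>*\<^sup>* (c ! i) (c ! ((i + k) mod ?n))" for k
  proof (induction k)
    case (Suc k)
    have "(i + k) mod ?n < ?n" using ij(1) by (auto intro: mod_less_divisor)
    then have "E (c ! ((i + k) mod ?n)) (c ! (Suc ((i + k) mod ?n) mod ?n))"
      using assms(1) unfolding is_cycle_def by blast
    moreover have "Suc ((i + k) mod ?n) mod ?n = (i + Suc k) mod ?n" by (simp add: mod_Suc_eq)
    ultimately show ?case using Suc by (metis rtranclp.rtrancl_into_rtrancl)
  qed (use ij in simp)
  from this[of "j + ?n - i"] show ?thesis using ij by simp
qed

lemma fst_cycle_edges: "fst ` cycle_edges c = set c"
  unfolding cycle_edges_def by (auto simp: in_set_conv_nth image_iff)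

lemma cycle_vertices_subset: "cycle_vertices V E \<subseteq> V"
  unfolding cycle_vertices_def is_cycle_def by auto

lemma cycle_reachable_vertices_subset: "cycle_reachable_vertices V E \<subseteq> V"
  unfolding cycle_reachable_vertices_def is_path_def
  using cycle_vertices_subset by fastforce

lemma leads_into_cycles_iff:
  assumes edges: "\<forall>x y. E x y \<longrightarrow> x \<in> V \<and> y \<in> V" and "x \<notin> cycle_vertices V E"
  shows "leads_into_cycles V E x \<longleftrightarrow> (\<forall>c \<in> cycle_vertices V E. \<not> E\<^sup>*\<^sup>* c x)"
proof -
  have "leads_into_cycles V E x \<longleftrightarrow>
      (\<forall>c \<in> cycle_vertices V E. \<not> (\<exists>p. is_path V E p \<and> hd p = c \<and> last p = x))"
    using assms(2) unfolding leads_into_cycles_def by blast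
  also have "\<dots> \<longleftrightarrow> (\<forall>c \<in> cycle_vertices V E. \<not> E\<^sup>*\<^sup>* c x)"
    using cycle_vertices_subset[of V E] by (auto simp: ex_path_iff_rtranclp[OF edges])
  finally show ?thesis .
qed

lemma leads_from_cycles_iff:
  assumes edges: "\<forall>x y. E x y \<longrightarrow> x \<in> V \<and> y \<in> V"
    and "x \<in> V" "x \<notin> cycle_vertices V E"
  shows "leads_from_cycles V E x \<longleftrightarrow> (\<forall>c \<in> cycle_vertices V E. \<not> E\<^sup>*\<^sup>* x c)"
proof -
  have "leads_from_cycles V E x \<longleftrightarrow>
      (\<forall>c \<in> cycle_vertices V E. \<not> (\<exists>p. is_path V E p \<and> hd p = x \<and> last p = c))"
    using assms(3) unfolding leads_from_cycles_def by blast
  also have "\<dots> \<longleftrightarrow> (\<forall>c \<in> cycle_vertices V E. \<not> E\<^sup>*\<^sup>* x c)"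
    using assms(2) by (simp add: ex_path_iff_rtranclp[OF edges])
  finally show ?thesis .
qed

lemma leads_into_or_from_cycles:
  assumes graph: "simple_oriented_graph V E" and no_conn: "no_connected_cycles V E"
    and x: "x \<in> V" "x \<notin> cycle_vertices V E"
  shows "leads_into_cycles V E x \<or> leads_from_cycles V E x"
proof (rule ccontr)
  let ?C = "cycle_vertices V E"
  have edges: "\<forall>x y. E x y \<longrightarrow> x \<in> V \<and> y \<in> V"
    using graph unfolding simple_oriented_graph_def by blast
  assume "\<not> ?thesis"
  then obtain a b where ab: "a \<in> ?C" "E\<^sup>*\<^sup>* a x" "b \<in> ?C" "E\<^sup>*\<^sup>* x b"
    using leads_into_cycles_iff[OF edges x(2)] leads_from_cycles_iff[OF edges x] by blast
  obtain c d where c: "is_cycle V E c" "a \<in> set c" and d: "is_cycle V E d" "b \<in> set d"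
    using ab unfolding cycle_vertices_def by blast
  have "\<exists>p. is_path V E p \<and> hd p = a \<and> last p = b"
    using ab cycle_vertices_subset ex_path_iff_rtranclp[OF edges] rtranclp_trans by fast
  then have "cycle_edges c = cycle_edges d"
    using no_conn c d unfolding no_connected_cycles_def by blast
  then have "b \<in> set c" using d(2) fst_cycle_edges by metis
  then have "E\<^sup>*\<^sup>* b a" using cycle_rtranclp[OF c(1) _ c(2)] by blast
  moreover have "E\<^sup>+\<^sup>+ x b" using ab(3,4) x(2) by (metis rtranclpD)
  ultimately have "E\<^sup>+\<^sup>+ x x" using ab(2) by (meson rtranclp_trans tranclp_rtranclp_tranclp)
  then show False using tranclp_self_imp_cycle_vertex[OF graph] x(2) by blast
qed

lemma simple_oriented_graph_conversep:
  "simple_oriented_graph V E \<Longrightarrow> simple_oriented_graph V E\<inverse>\<inverse>"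
  unfolding simple_oriented_graph_def by auto

lemma reduced_imp_in_neighbour_between:
  assumes "reduced E ord u" "u = a @ t # w @ t # b" "t \<notin> set w"
  shows "\<exists>y \<in> set w. E y t"
proof -
  have "\<not> not_to E w t"
    using assms(1,2) unfolding reduced_def by (simp only: append_Cons append_Nil) blast
  then show ?thesis using assms(3) unfolding not_to_def by auto
qed

lemma reduced_imp_out_neighbour_between:
  assumes "reduced E ord u" "u = a @ t # w @ t # b" "t \<notin> set w"
  shows "\<exists>y \<in> set w. E\<inverse>\<inverse> y t"
proof -
  have "\<not> not_from E t w"
    using assms(1,2) unfolding reduced_def by (simp only: append_Cons append_Nil) blast
  then show ?thesis using assms(3) unfolding not_from_def by auto
qed

lemma count_list_le_Suc_length_filter:
  assumes "\<And>a w b. u = a @ t # w @ t # b \<Longrightarrow> t \<notin> set w \<Longrightarrow> \<exists>y \<in> set w. P y"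
    and "\<not> P t"
  shows "count_list u t \<le> Suc (length (filter P u))"
  using assms(1)
proof (induction u rule: length_induct)
  case (1 u)
  show ?case
  proof (cases "t \<in> set u")
    case True
    then obtain w b where u: "u = w @ t # b" "t \<notin> set w" by (metis split_list_first)
    show ?thesis
    proof (cases "t \<in> set b")
      case True
      then obtain w' b' where b: "b = w' @ t # b'" "t \<notin> set w'" by (metis split_list_first)
      have "\<exists>y \<in> set w'. P y" using "1.prems"[of w w' b'] u b by simp
      then have w'_filter: "length (filter P w') \<ge> 1"
        by (metis One_nat_def Suc_leI filter_empty_conv length_greater_0_conv)
      have "count_list (t # b') t \<le> Suc (length (filter P (t # b')))"
      proof (rule "1.IH"[rule_format])
        show "length (t # b') < length u" using u b by simp
        show "\<exists>y \<in> set w''. P y" if "t # b' = a @ t # w'' @ t # b''" "t \<notin> set w''" for a w'' b''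
          using "1.prems"[of "w @ t # w' @ a" w'' b''] that u b by simp
      qed
      then show ?thesis using u b w'_filter assms(2) by simp
    qed (use u in simp)
  qed simp
qed

lemma length_filter_mem_eq_sum_count_list:
  assumes "finite N"
  shows "length (filter (\<lambda>y. y \<in> N) u) = (\<Sum>y\<in>N. count_list u y)"
proof (induction u)
  case (Cons a u)
  have "(\<Sum>y\<in>N. count_list (a # u) y) = (\<Sum>y\<in>N. count_list u y + (if a = y then 1 else 0))"
    by (intro sum.cong) auto
  also have "\<dots> = (\<Sum>y\<in>N. count_list u y) + (if a \<in> N then 1 else 0)"
    using assms by (simp add: sum.distrib)
  finally show ?case using Cons by simp
qed simp

lemma card_paths_ending_at_ge:
  assumes graph: "simple_oriented_graph V E" and v: "v \<in> V" and acyclic: "\<not> E\<^sup>+\<^sup>+ v v"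
  shows "Suc (\<Sum>y | E y v. card (paths_ending_at V E y)) \<le> card (paths_ending_at V E v)"
proof -
  let ?S = "paths_ending_at V E" and ?N = "{y. E y v}" and ?ext = "\<lambda>p. p @ [v]"
  have fin: "finite V" and edges: "\<forall>a b. E a b \<longrightarrow> a \<in> V \<and> b \<in> V"
    using graph unfolding simple_oriented_graph_def by auto
  have fin_N: "finite ?N" using edges fin by (metis mem_Collect_eq rev_finite_subset subsetI)
  have fin_S: "finite (?S y)" for y using finite_paths[OF fin] by (rule rev_finite_subset) blast
  have ext: "?ext p \<in> ?S v" if "y \<in> ?N" "p \<in> ?S y" for y p
  proof -
    have p: "is_path V E p" "last p = y" "E y v" using that by auto
    have "v \<notin> set p"
    proof
      assume "v \<in> set p"
      then have "E\<^sup>*\<^sup>* v y" using is_path_rtranclp_last[OF p(1)] p(2) by blast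
      then show False using acyclic p(3) by (metis rtranclp_into_tranclp1)
    qed
    then show ?thesis using is_path_snoc[OF p(1)] p v by simp
  qed
  have "[v] \<in> ?S v" using v unfolding is_path_def by simp
  then have sub: "insert [v] (\<Union>y\<in>?N. ?ext ` ?S y) \<subseteq> ?S v" using ext by blast
  have "card (insert [v] (\<Union>y\<in>?N. ?ext ` ?S y)) = Suc (card (\<Union>y\<in>?N. ?ext ` ?S y))"
    using fin_N fin_S unfolding is_path_def by (intro card_insert_disjoint) auto
  also have "card (\<Union>y\<in>?N. ?ext ` ?S y) = (\<Sum>y\<in>?N. card (?ext ` ?S y))"
    using fin_N fin_S by (intro card_UN_disjoint) auto
  also have "\<dots> = (\<Sum>y\<in>?N. card (?S y))"
    by (intro sum.cong refl card_image) (simp add: inj_on_def)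
  finally show ?thesis using card_mono[OF fin_S sub] by simp
qed

lemma count_list_le_card_paths_ending_at:
  assumes graph: "simple_oriented_graph V E"
    and separated: "\<And>a t w b. u = a @ t # w @ t # b \<Longrightarrow> t \<notin> set w \<Longrightarrow> \<exists>y \<in> set w. E y t"
  shows "v \<in> V \<Longrightarrow> (\<And>y. E\<^sup>*\<^sup>* y v \<Longrightarrow> \<not> E\<^sup>+\<^sup>+ y y) \<Longrightarrow>
    count_list u v \<le> card (paths_ending_at V E v)"
proof (induction "card (paths_ending_at V E v)" arbitrary: v rule: less_induct)
  case less
  let ?k = "\<lambda>y. card (paths_ending_at V E y)" and ?N = "{y. E y v}"
  have fin: "finite V" and edges: "\<forall>a b. E a b \<longrightarrow> a \<in> V \<and> b \<in> V" and irr: "\<not> E v v"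
    using graph unfolding simple_oriented_graph_def by auto
  have fin_N: "finite ?N" using edges fin by (metis mem_Collect_eq rev_finite_subset subsetI)
  have step: "Suc (\<Sum>y\<in>?N. ?k y) \<le> ?k v"
    using card_paths_ending_at_ge[OF graph less.prems(1)] less.prems(2) by blast
  have "count_list u v \<le> Suc (length (filter (\<lambda>y. y \<in> ?N) u))"
    using count_list_le_Suc_length_filter[OF separated] irr by simp
  also have "length (filter (\<lambda>y. y \<in> ?N) u) = (\<Sum>y\<in>?N. count_list u y)"
    by (rule length_filter_mem_eq_sum_count_list[OF fin_N])
  also have "(\<Sum>y\<in>?N. count_list u y) \<le> (\<Sum>y\<in>?N. ?k y)"
  proof (rule sum_mono)
    fix y assume y: "y \<in> ?N"
    have "?k y < ?k v" using step member_le_sum[OF y _ fin_N, of ?k] by simp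
    moreover have "y \<in> V" using y edges by blast
    moreover have "\<not> E\<^sup>+\<^sup>+ z z" if "E\<^sup>*\<^sup>* z y" for z
      using less.prems(2) that y by (meson mem_Collect_eq rtranclp.rtrancl_into_rtrancl)
    ultimately show "count_list u y \<le> ?k y" using less.hyps by blast
  qed
  finally show ?case using step by simp
qed

theorem lemma3p1:
  fixes V :: "'a set" and E :: "'a \<Rightarrow> 'a \<Rightarrow> bool" and x :: 'a
  assumes graph: "simple_oriented_graph V E"
    and has_cycle: "\<exists>c. is_cycle V E c"
    and no_conn: "no_connected_cycles V E"
    and x_in: "x \<in> cycle_reachable_vertices V E"
    and x_not_cycle: "x \<notin> cycle_vertices V E"
  shows "(leads_into_cycles V E x \<or> leads_from_cycles V E x) \<and>
    (\<forall>ord u. strict_linear_order_on V ord \<and> set u \<subseteq> V \<and> reduced E ord u \<longrightarrow>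
       (leads_into_cycles V E x \<longrightarrow>
          count_list u x \<le> card {p. is_path V E p \<and> last p = x}) \<and>
       (leads_from_cycles V E x \<longrightarrow>
          count_list u x \<le> card {p. is_path V E p \<and> hd p = x}))"
proof -
  have edges: "\<forall>a b. E a b \<longrightarrow> a \<in> V \<and> b \<in> V"
    using graph unfolding simple_oriented_graph_def by blast
  have x_V: "x \<in> V" using x_in cycle_reachable_vertices_subset[of V E] by blast
  have count_into: "count_list u x \<le> card (paths_ending_at V E x)"
    if "leads_into_cycles V E x" "reduced E ord u" for ord u
  proof (rule count_list_le_card_paths_ending_at
      [OF graph reduced_imp_in_neighbour_between[OF that(2)] x_V])
    fix y assume "E\<^sup>*\<^sup>* y x"
    then have "y \<notin> cycle_vertices V E"
      using leads_into_cycles_iff[OF edges x_not_cycle] that(1) by blast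
    then show "\<not> E\<^sup>+\<^sup>+ y y" using tranclp_self_imp_cycle_vertex[OF graph] by blast
  qed
  have count_from: "count_list u x \<le> card (paths_starting_at V E x)"
    if "leads_from_cycles V E x" "reduced E ord u" for ord u
  proof -
    have "count_list u x \<le> card (paths_ending_at V E\<inverse>\<inverse> x)"
    proof (rule count_list_le_card_paths_ending_at[OF simple_oriented_graph_conversep[OF graph]
          reduced_imp_out_neighbour_between[OF that(2)] x_V])
      fix y assume "E\<inverse>\<inverse>\<^sup>*\<^sup>* y x"
      then have "y \<notin> cycle_vertices V E"
        using leads_from_cycles_iff[OF edges x_V x_not_cycle] that(1)
        by (auto simp: rtranclp_conversep)
      then show "\<not> E\<inverse>\<inverse>\<^sup>+\<^sup>+ y y"
        using tranclp_self_imp_cycle_vertex[OF graph] by (auto simp: tranclp_converse)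
    qed
    then show ?thesis by (simp add: card_paths_ending_at_conversep)
  qed
  show ?thesis
    using leads_into_or_from_cycles[OF graph no_conn x_V x_not_cycle] count_into count_from by blast
qed

end
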